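(* Let $Q$ be a good quantifier of type $\langle k\rangle$ on $\mathbb{N}$. Then for every $n$ and every $a\in\mathbb{N}^n$, the orbit $\{g(a):g\in\mathrm{Aut}(Q)\}$ is definable in $\mathscr{L}_{\omega\omega}(Q)$.
   Context: A quantifier of type $\langle k\rangle$ on $\mathbb{N}$ is a set $Q\subseteq 2^{\mathbb{N}^k}$ (a family of subsets of $\mathbb{N}^k$; $2^{\mathbb{N}^k}$ carries the product topology). $Q$ is downwards closed if it is closed under subsets. For a map $p$ and $A\subseteq\mathbb{N}^k$, $p(A)=\{(p(a_1),\dots,p(a_k)):(a_1,\dots,a_k)\in A\}$. For $Q$ closed and downwards closed, a function $p:n\to\mathbb{N}$ (where $n=\{0,\dots,n-1\}$) is compatible with $Q$ if for every $A\subseteq n^k$, $A\in Q\iff p(A)\in Q$. A permutation $f$ of $\mathbb{N}$ fixes (leaves invariant) $Q$ if $A\in Q\iff f(A)\in Q$ for all $A\subseteq\mathbb{N}^k$; $\mathrm{Aut}(Q)$ is the group of such permutations, acting on tuples coordinatewise. $Q$ is good if it is closed, downwards closed, and every finite injection $p:n\to\mathbb{N}$ compatible with $Q$ extends to a permutation of $\mathbb{N}$ fixing $Q$. $\mathscr{L}_{\omega\omega}(Q)$ is first-order logic extended by formulas $Qx\,\varphi(x,y)$ ($x$ a $k$-tuple of variables) with $\mathbb{N}\models Qx\,\varphi(x,b)$ iff $\{a\in\mathbb{N}^k:\mathbb{N}\models\varphi(a,b)\}\in Q$. A set $B\subseteq\mathbb{N}^n$ is definable in $\mathscr{L}_{\omega\omega}(Q)$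 if there is a formula $\varphi(x_1,\dots,x_n)$ whose only non-logical symbol is $Q$ such that $b\in B\iff\mathbb{N}\models\varphi(b)$. *)

theory Defs
  imports Main
begin

definition tuples :: "nat \<Rightarrow> nat list set" where
  "tuples k = {xs. length xs = k}"

definition tuples_below :: "nat \<Rightarrow> nat \<Rightarrow> nat list set" where
  "tuples_below n k = {xs. length xs = k \<and> (\<forall>x\<in>set xs. x < n)}"

definition is_quantifier :: "nat \<Rightarrow> nat list set set \<Rightarrow> bool" where
  "is_quantifier k Q \<longleftrightarrow> Q \<subseteq> Pow (tuples k)"

text \<open>Closedness in the product topology on 2^(N^k) (unfolded: A lies in the closure
  iff every basic neighbourhood, determined by a finite F, meets Q).\<close>
definition quant_closed :: "nat \<Rightarrow> nat list set set \<Rightarrow> bool" where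
  "quant_closed k Q \<longleftrightarrow>
     (\<forall>A. A \<subseteq> tuples k \<longrightarrow>
        (\<forall>F. F \<subseteq> tuples k \<and> finite F \<longrightarrow> (\<exists>B\<in>Q. A \<inter> F = B \<inter> F)) \<longrightarrow> A \<in> Q)"

definition down_closed :: "nat list set set \<Rightarrow> bool" where
  "down_closed Q \<longleftrightarrow> (\<forall>A B. A \<in> Q \<and> B \<subseteq> A \<longrightarrow> B \<in> Q)"

text \<open>p : n \<rightarrow> N compatible with Q (only the values of p on {0..<n} matter).\<close>
definition compatible :: "nat \<Rightarrow> nat list set set \<Rightarrow> nat \<Rightarrow> (nat \<Rightarrow> nat) \<Rightarrow> bool" where
  "compatible k Q n p \<longleftrightarrow>
     (\<forall>A. A \<subseteq> tuples_below n k \<longrightarrow> (A \<in> Q \<longleftrightarrow> map p ` A \<in> Q))"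

definition fixes_quant :: "nat \<Rightarrow> nat list set set \<Rightarrow> (nat \<Rightarrow> nat) \<Rightarrow> bool" where
  "fixes_quant k Q f \<longleftrightarrow> (\<forall>A. A \<subseteq> tuples k \<longrightarrow> (A \<in> Q \<longleftrightarrow> map f ` A \<in> Q))"

definition Aut :: "nat \<Rightarrow> nat list set set \<Rightarrow> (nat \<Rightarrow> nat) set" where
  "Aut k Q = {f. bij f \<and> fixes_quant k Q f}"

definition good :: "nat \<Rightarrow> nat list set set \<Rightarrow> bool" where
  "good k Q \<longleftrightarrow> quant_closed k Q \<and> down_closed Q \<and>
     (\<forall>n p. inj_on p {..<n} \<and> compatible k Q n p \<longrightarrow>
        (\<exists>f\<in>Aut k Q. \<forall>i<n. f i = p i))"

definition orbit :: "nat \<Rightarrow> nat list set set \<Rightarrow> nat list \<Rightarrow> nat list set" where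
  "orbit k Q a = {map g a | g. g \<in> Aut k Q}"

datatype fm =
    Eq nat nat
  | Neg fm
  | Conj fm fm
  | Ex nat fm
  | QAp "nat list" fm

fun wf_fm :: "nat \<Rightarrow> fm \<Rightarrow> bool" where
  "wf_fm k (Eq x y) = True"
| "wf_fm k (Neg \<phi>) = wf_fm k \<phi>"
| "wf_fm k (Conj \<phi> \<psi>) = (wf_fm k \<phi> \<and> wf_fm k \<psi>)"
| "wf_fm k (Ex x \<phi>) = wf_fm k \<phi>"
| "wf_fm k (QAp xs \<phi>) = (length xs = k \<and> distinct xs \<and> wf_fm k \<phi>)"

fun fv :: "fm \<Rightarrow> nat set" where
  "fv (Eq x y) = {x, y}"
| "fv (Neg \<phi>) = fv \<phi>"
| "fv (Conj \<phi> \<psi>) = fv \<phi> \<union> fv \<psi>"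
| "fv (Ex x \<phi>) = fv \<phi> - {x}"
| "fv (QAp xs \<phi>) = fv \<phi> - set xs"

fun upds :: "(nat \<Rightarrow> nat) \<Rightarrow> nat list \<Rightarrow> nat list \<Rightarrow> (nat \<Rightarrow> nat)" where
  "upds e (x # xs) (a # as) = (upds e xs as)(x := a)"
| "upds e _ _ = e"

fun sat :: "nat list set set \<Rightarrow> (nat \<Rightarrow> nat) \<Rightarrow> fm \<Rightarrow> bool" where
  "sat Q e (Eq x y) = (e x = e y)"
| "sat Q e (Neg \<phi>) = (\<not> sat Q e \<phi>)"
| "sat Q e (Conj \<phi> \<psi>) = (sat Q e \<phi> \<and> sat Q e \<psi>)"
| "sat Q e (Ex x \<phi>) = (\<exists>a. sat Q (e(x := a)) \<phi>)"
| "sat Q e (QAp xs \<phi>) = ({a. length a = length xs \<and> sat Q (upds e xs a) \<phi>} \<in> Q)"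

text \<open>B \<subseteq> N^n is definable in L_{\<omega>\<omega>}(Q): some formula with free variables among
  0..n-1 (playing x_1..x_n) defines it.\<close>
definition definable :: "nat \<Rightarrow> nat list set set \<Rightarrow> nat \<Rightarrow> nat list set \<Rightarrow> bool" where
  "definable k Q n B \<longleftrightarrow>
     (\<exists>\<phi>. wf_fm k \<phi> \<and> fv \<phi> \<subseteq> {..<n} \<and>
        (\<forall>b. length b = n \<longrightarrow> (b \<in> B \<longleftrightarrow> sat Q (\<lambda>i. b ! i) \<phi>)))"

end

theory Submission
  imports Defs
begin

(* Let a \<in> N^n with all entries below M.  Because Q is good, the orbit of a
   consists exactly of the tuples  map p a  where p : M \<rightarrow> N is injective and compatible
   with Q: restrictions of automorphisms are such maps, and conversely every such map
   extends to an automorphism.  Both conditions on p are first-order in L(Q) once the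
   values p 0, ..., p (M-1) are held in variables n, ..., n+M-1:  injectivity is a
   conjunction of inequalities, and compatibility is a finite conjunction, over all sets
   A of k-tuples below M, of "map p ` A \<in> Q" or its negation, each of which is one
   application of the quantifier Q to the disjunction "the bound tuple is p applied to
   some t \<in> A".  Existentially quantifying the M witness variables defines the orbit. *)

definition TT :: fm where "TT = Ex 0 (Eq 0 0)"

fun conjs :: "fm list \<Rightarrow> fm" where
  "conjs [] = TT"
| "conjs (\<phi> # \<phi>s) = Conj \<phi> (conjs \<phi>s)"

fun disjs :: "fm list \<Rightarrow> fm" where
  "disjs [] = Neg TT"
| "disjs (\<phi> # \<phi>s) = Neg (Conj (Neg \<phi>) (Neg (disjs \<phi>s)))"

fun exs :: "nat list \<Rightarrow> fm \<Rightarrow> fm" where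
  "exs [] \<phi> = \<phi>"
| "exs (v # vs) \<phi> = Ex v (exs vs \<phi>)"

lemma sat_TT [simp]: "sat Q e TT" and fv_TT [simp]: "fv TT = {}" and wf_TT [simp]: "wf_fm k TT"
  by (simp_all add: TT_def)

lemma sat_conjs [simp]: "sat Q e (conjs \<phi>s) \<longleftrightarrow> (\<forall>\<phi>\<in>set \<phi>s. sat Q e \<phi>)"
  and fv_conjs [simp]: "fv (conjs \<phi>s) = (\<Union>\<phi>\<in>set \<phi>s. fv \<phi>)"
  and wf_conjs [simp]: "wf_fm k (conjs \<phi>s) \<longleftrightarrow> (\<forall>\<phi>\<in>set \<phi>s. wf_fm k \<phi>)"
  by (induction \<phi>s) auto

lemma sat_disjs [simp]: "sat Q e (disjs \<phi>s) \<longleftrightarrow> (\<exists>\<phi>\<in>set \<phi>s. sat Q e \<phi>)"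
  and fv_disjs [simp]: "fv (disjs \<phi>s) = (\<Union>\<phi>\<in>set \<phi>s. fv \<phi>)"
  and wf_disjs [simp]: "wf_fm k (disjs \<phi>s) \<longleftrightarrow> (\<forall>\<phi>\<in>set \<phi>s. wf_fm k \<phi>)"
  by (induction \<phi>s) auto

lemma fv_exs [simp]: "fv (exs vs \<phi>) = fv \<phi> - set vs"
  and wf_exs [simp]: "wf_fm k (exs vs \<phi>) = wf_fm k \<phi>"
  by (induction vs) auto

lemma sat_exs:
  "sat Q e (exs vs \<phi>) \<longleftrightarrow> (\<exists>e'. (\<forall>x. x \<notin> set vs \<longrightarrow> e' x = e x) \<and> sat Q e' \<phi>)"
proof (induction vs arbitrary: e)
  case Nil
  then show ?case by (auto simp: fun_eq_iff)
next
  case (Cons v vs)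
  show ?case
  proof
    assume "sat Q e (exs (v # vs) \<phi>)"
    then obtain c where "sat Q (e(v := c)) (exs vs \<phi>)" by auto
    then obtain e' where "\<forall>x. x \<notin> set vs \<longrightarrow> e' x = (e(v := c)) x" "sat Q e' \<phi>"
      using Cons.IH by blast
    then show "\<exists>e'. (\<forall>x. x \<notin> set (v # vs) \<longrightarrow> e' x = e x) \<and> sat Q e' \<phi>"
      by (intro exI[of _ e']) auto
  next
    assume "\<exists>e'. (\<forall>x. x \<notin> set (v # vs) \<longrightarrow> e' x = e x) \<and> sat Q e' \<phi>"
    then obtain e' where agree: "\<forall>x. x \<notin> set (v # vs) \<longrightarrow> e' x = e x" and "sat Q e' \<phi>"
      by blast
    moreover have "\<forall>x. x \<notin> set vs \<longrightarrow> e' x = (e(v := e' v)) x" using agree by auto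
    ultimately have "sat Q (e(v := e' v)) (exs vs \<phi>)" using Cons.IH by blast
    then show "sat Q e (exs (v # vs) \<phi>)" by auto
  qed
qed

lemma upds_out: "x \<notin> set xs \<Longrightarrow> upds e xs c x = e x"
  by (induction e xs c rule: upds.induct) auto

lemma upds_in:
  "distinct xs \<Longrightarrow> length c = length xs \<Longrightarrow> j < length xs \<Longrightarrow> upds e xs c (xs ! j) = c ! j"
proof (induction xs arbitrary: c j)
  case (Cons y ys)
  then obtain c0 cs where c: "c = c0 # cs" by (cases c) auto
  show ?case
  proof (cases j)
    case (Suc j')
    then have "ys ! j' \<noteq> y" using Cons.prems by (auto simp: nth_mem)
    then show ?thesis using Cons c Suc by auto
  qed (use c in simp)
qed simp

lemma upds_upt: "length c = k \<Longrightarrow> j < k \<Longrightarrow> upds e [m..<m+k] c (m+j) = c ! j"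
  using upds_in[of "[m..<m+k]" c j e] by simp

lemma compatible_cong:
  assumes "\<forall>j<M. p j = q j"
  shows "compatible k Q M p \<longleftrightarrow> compatible k Q M q"
proof -
  have "map p ` A = map q ` A" if "A \<subseteq> tuples_below M k" for A
    using that assms by (intro image_cong refl map_cong) (auto simp: tuples_below_def)
  then show ?thesis unfolding compatible_def by auto
qed

lemma Aut_restriction_compatible:
  assumes "f \<in> Aut k Q"
  shows "inj_on f {..<M}" and "compatible k Q M f"
proof -
  show "inj_on f {..<M}"
    using assms by (auto simp: Aut_def bij_def intro: inj_on_subset)
  have "tuples_below M k \<subseteq> tuples k" by (auto simp: tuples_below_def tuples_def)
  then show "compatible k Q M f"
    using assms by (auto simp: Aut_def fixes_quant_def compatible_def)
qed

lemma orbit_good: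
  assumes "good k Q" and "set a \<subseteq> {..<M}"
  shows "b \<in> orbit k Q a \<longleftrightarrow> (\<exists>p. inj_on p {..<M} \<and> compatible k Q M p \<and> b = map p a)"
proof
  assume "b \<in> orbit k Q a"
  then show "\<exists>p. inj_on p {..<M} \<and> compatible k Q M p \<and> b = map p a"
    unfolding orbit_def using Aut_restriction_compatible by blast
next
  assume "\<exists>p. inj_on p {..<M} \<and> compatible k Q M p \<and> b = map p a"
  then obtain p where "inj_on p {..<M}" "compatible k Q M p" and b: "b = map p a" by blast
  then obtain f where f: "f \<in> Aut k Q" "\<forall>i<M. f i = p i"
    using assms(1) unfolding good_def by blast
  have "map f a = map p a" using f(2) assms(2) by (auto intro: map_cong)
  then show "b \<in> orbit k Q a" unfolding orbit_def b using f(1) by (metis (mono_tags) mem_Collect_eq)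
qed

text \<open>Throughout, the witness map p : M \<rightarrow> N is stored in the variables n, ..., n+M-1,
  i.e. p j is the value of variable n+j, and Q binds the variables n+M, ..., n+M+k-1.\<close>

definition tuple_is_fm :: "nat \<Rightarrow> nat \<Rightarrow> nat \<Rightarrow> nat list \<Rightarrow> fm" where
  "tuple_is_fm k n M t = conjs (map (\<lambda>j. Eq (n+M+j) (n + t!j)) [0..<k])"

definition image_in_Q_fm :: "nat \<Rightarrow> nat \<Rightarrow> nat \<Rightarrow> nat list list \<Rightarrow> fm" where
  "image_in_Q_fm k n M ts = QAp [n+M..<n+M+k] (disjs (map (tuple_is_fm k n M) ts))"

lemma sat_image_in_Q_fm:
  assumes ts: "set ts \<subseteq> tuples_below M k"
  shows "sat Q e (image_in_Q_fm k n M ts) \<longleftrightarrow> map (\<lambda>j. e (n+j)) ` set ts \<in> Q"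
proof -
  let ?p = "\<lambda>j. e (n+j)" and ?zs = "[n+M..<n+M+k]"
  have tuple_is: "sat Q (upds e ?zs c) (tuple_is_fm k n M t) \<longleftrightarrow> c = map ?p t"
    if "length c = k" "t \<in> set ts" for c t
  proof -
    have t: "length t = k" "\<forall>x\<in>set t. x < M" using that(2) ts by (auto simp: tuples_below_def)
    have bound: "upds e ?zs c (n+M+j) = c!j" if "j < k" for j
      using \<open>length c = k\<close> that by (rule upds_upt)
    have free: "upds e ?zs c (n + t!j) = ?p (t!j)" if "j < k" for j
    proof -
      have "t!j < M" using that t by (simp add: nth_mem)
      then show ?thesis by (intro upds_out) simp
    qed
    have "sat Q (upds e ?zs c) (tuple_is_fm k n M t) \<longleftrightarrow>
          (\<forall>j<k. upds e ?zs c (n+M+j) = upds e ?zs c (n + t!j))"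
      by (auto simp: tuple_is_fm_def)
    also have "\<dots> \<longleftrightarrow> (\<forall>j<k. c!j = ?p (t!j))"
      using bound free by (intro all_cong) simp
    also have "\<dots> \<longleftrightarrow> c = map ?p t"
      using t(1) \<open>length c = k\<close> by (auto simp: list_eq_iff_nth_eq)
    finally show ?thesis .
  qed
  have "{c. length c = length ?zs \<and> sat Q (upds e ?zs c) (disjs (map (tuple_is_fm k n M) ts))}
        = {c. length c = k \<and> (\<exists>t\<in>set ts. c = map ?p t)}"
    using tuple_is by auto
  also have "\<dots> = map ?p ` set ts"
    using ts by (auto simp: tuples_below_def)
  finally show ?thesis by (simp add: image_in_Q_fm_def)
qed

lemma fv_image_in_Q_fm:
  assumes "set ts \<subseteq> tuples_below M k"
  shows "fv (image_in_Q_fm k n M ts) \<subseteq> {n..<n+M}"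
  using assms by (fastforce simp: image_in_Q_fm_def tuple_is_fm_def tuples_below_def nth_mem)

definition tuple_list :: "nat \<Rightarrow> nat \<Rightarrow> nat list list" where
  "tuple_list k M = List.n_lists k [0..<M]"

lemma set_tuple_list: "set (tuple_list k M) = tuples_below M k"
  by (auto simp: tuple_list_def set_n_lists tuples_below_def)

lemma subseqs_tuple_list: "set ` set (subseqs (tuple_list k M)) = Pow (tuples_below M k)"
  by (simp add: subseqs_powset set_tuple_list)

definition compatible_fm :: "nat \<Rightarrow> nat list set set \<Rightarrow> nat \<Rightarrow> nat \<Rightarrow> fm" where
  "compatible_fm k Q n M = conjs (map (\<lambda>ts. if set ts \<in> Q then image_in_Q_fm k n M ts
                                             else Neg (image_in_Q_fm k n M ts))
                                      (subseqs (tuple_list k M)))"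

lemma sat_compatible_fm:
  "sat Q e (compatible_fm k Q n M) \<longleftrightarrow> compatible k Q M (\<lambda>j. e (n+j))"
proof -
  let ?p = "\<lambda>j. e (n+j)" and ?subsets = "set (subseqs (tuple_list k M))"
  have sets: "set ` ?subsets = Pow (tuples_below M k)" by (rule subseqs_tuple_list)
  then have tuples: "set ts \<subseteq> tuples_below M k" if "ts \<in> ?subsets" for ts
    using that by blast
  have "sat Q e (compatible_fm k Q n M) \<longleftrightarrow>
        (\<forall>ts\<in>?subsets. sat Q e (if set ts \<in> Q then image_in_Q_fm k n M ts
                                  else Neg (image_in_Q_fm k n M ts)))"
    unfolding compatible_fm_def by (simp only: sat_conjs set_map ball_simps)
  also have "\<dots> \<longleftrightarrow> (\<forall>ts\<in>?subsets. set ts \<in> Q \<longleftrightarrow> map ?p ` set ts \<in> Q)"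
    by (intro ball_cong refl) (simp add: sat_image_in_Q_fm[OF tuples])
  also have "\<dots> \<longleftrightarrow> (\<forall>A\<in>Pow (tuples_below M k). A \<in> Q \<longleftrightarrow> map ?p ` A \<in> Q)"
    unfolding sets[symmetric] by blast
  finally show ?thesis by (auto simp: compatible_def)
qed

lemma fv_compatible_fm: "fv (compatible_fm k Q n M) \<subseteq> {n..<n+M}"
proof -
  have "set ts \<subseteq> tuples_below M k" if "ts \<in> set (subseqs (tuple_list k M))" for ts
    using that subseqs_tuple_list[of k M] by blast
  then show ?thesis using fv_image_in_Q_fm by (fastforce simp: compatible_fm_def)
qed

lemma wf_compatible_fm: "wf_fm k (compatible_fm k Q n M)"
  by (auto simp: compatible_fm_def image_in_Q_fm_def tuple_is_fm_def)

definition injective_fm :: "nat \<Rightarrow> nat \<Rightarrow> fm" where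
  "injective_fm n M = conjs [Neg (Eq (n+i) (n+j)). i <- [0..<M], j <- [0..<M], i \<noteq> j]"

lemma sat_injective_fm: "sat Q e (injective_fm n M) \<longleftrightarrow> inj_on (\<lambda>j. e (n+j)) {..<M}"
proof -
  have "sat Q e (injective_fm n M) \<longleftrightarrow> (\<forall>i<M. \<forall>j<M. i \<noteq> j \<longrightarrow> e (n+i) \<noteq> e (n+j))"
    by (auto simp: injective_fm_def)
  then show ?thesis unfolding inj_on_def by blast
qed

lemma fv_injective_fm: "fv (injective_fm n M) \<subseteq> {n..<n+M}"
  by (auto simp: injective_fm_def)

definition orbit_fm :: "nat \<Rightarrow> nat list set set \<Rightarrow> nat \<Rightarrow> nat list \<Rightarrow> fm" where
  "orbit_fm k Q M a = (let n = length a in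
     exs [n..<n+M] (Conj (injective_fm n M) (Conj (compatible_fm k Q n M)
       (conjs (map (\<lambda>i. Eq i (n + a!i)) [0..<n])))))"

lemma sat_orbit_fm:
  assumes a: "set a \<subseteq> {..<M}"
  shows "sat Q e (orbit_fm k Q M a) \<longleftrightarrow>
         (\<exists>p. inj_on p {..<M} \<and> compatible k Q M p \<and> (\<forall>i<length a. e i = p (a!i)))"
    (is "_ \<longleftrightarrow> (\<exists>p. ?good_witness p)")
proof -
  define n where "n = length a"
  have entries: "a!i < M" if "i < n" for i using a that nth_mem unfolding n_def by blast
  have unfold: "orbit_fm k Q M a = exs [n..<n+M] (Conj (injective_fm n M)
      (Conj (compatible_fm k Q n M) (conjs (map (\<lambda>i. Eq i (n + a!i)) [0..<n]))))"
    by (simp add: orbit_fm_def Let_def n_def)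
  have body: "sat Q e' (Conj (injective_fm n M)
      (Conj (compatible_fm k Q n M) (conjs (map (\<lambda>i. Eq i (n + a!i)) [0..<n]))))
      \<longleftrightarrow> ?good_witness (\<lambda>j. e' (n+j))"
    if agree: "\<forall>x. x \<notin> {n..<n+M} \<longrightarrow> e' x = e x" for e'
  proof -
    have "sat Q e' (conjs (map (\<lambda>i. Eq i (n + a!i)) [0..<n])) \<longleftrightarrow> (\<forall>i<n. e i = e' (n + a!i))"
      using agree by auto
    then show ?thesis by (simp add: sat_injective_fm sat_compatible_fm n_def)
  qed
  have "sat Q e (orbit_fm k Q M a) \<longleftrightarrow>
        (\<exists>e'. (\<forall>x. x \<notin> {n..<n+M} \<longrightarrow> e' x = e x) \<and> ?good_witness (\<lambda>j. e' (n+j)))"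
    unfolding unfold sat_exs set_upt using body by blast
  also have "\<dots> \<longleftrightarrow> (\<exists>p. ?good_witness p)"
  proof
    assume "\<exists>p. ?good_witness p"
    then obtain p where p: "?good_witness p" by blast
    define e' where "e' x = (if n \<le> x \<and> x < n+M then p (x-n) else e x)" for x
    have witness: "\<forall>j<M. e' (n+j) = p j" by (simp add: e'_def)
    have "inj_on (\<lambda>j. e' (n+j)) {..<M} \<longleftrightarrow> inj_on p {..<M}"
      by (rule inj_on_cong) (simp add: witness)
    moreover have "compatible k Q M (\<lambda>j. e' (n+j)) \<longleftrightarrow> compatible k Q M p"
      using witness by (rule compatible_cong)
    moreover have "\<forall>i<length a. e i = e' (n + a!i)"
      using p entries witness by (simp add: n_def)
    ultimately have "?good_witness (\<lambda>j. e' (n+j))" using p by blast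
    moreover have "\<forall>x. x \<notin> {n..<n+M} \<longrightarrow> e' x = e x" by (simp add: e'_def)
    ultimately show "\<exists>e'. (\<forall>x. x \<notin> {n..<n+M} \<longrightarrow> e' x = e x) \<and> ?good_witness (\<lambda>j. e' (n+j))"
      by blast
  qed blast
  finally show ?thesis .
qed

lemma fv_orbit_fm:
  assumes a: "set a \<subseteq> {..<M}"
  shows "fv (orbit_fm k Q M a) \<subseteq> {..<length a}"
proof -
  let ?n = "length a"
  have "a!i < M" if "i < ?n" for i using a that nth_mem by blast
  then have "fv (conjs (map (\<lambda>i. Eq i (?n + a!i)) [0..<?n])) \<subseteq> {..<?n} \<union> {?n..<?n+M}"
    by auto
  then show ?thesis
    using fv_injective_fm[of ?n M] fv_compatible_fm[of k Q ?n M]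
    by (auto simp: orbit_fm_def Let_def)
qed

lemma wf_orbit_fm: "wf_fm k (orbit_fm k Q M a)"
  by (simp add: orbit_fm_def injective_fm_def wf_compatible_fm Let_def)

theorem proposition12:
  fixes k :: nat and Q :: "nat list set set"
  assumes "is_quantifier k Q" and "good k Q"
  shows "\<forall>n a. length a = n \<longrightarrow> definable k Q n (orbit k Q a)"
proof (intro allI impI)
  fix n :: nat and a :: "nat list"
  assume len: "length a = n"
  define M where "M = Suc (Max (insert 0 (set a)))"
  have a_below: "set a \<subseteq> {..<M}" by (auto simp: M_def le_imp_less_Suc)
  have "b \<in> orbit k Q a \<longleftrightarrow> sat Q (\<lambda>i. b!i) (orbit_fm k Q M a)" if "length b = n" for b
  proof -
    have "b = map p a \<longleftrightarrow> (\<forall>i<length a. b!i = p (a!i))" for p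
      using that len by (simp add: list_eq_iff_nth_eq)
    then show ?thesis
      unfolding orbit_good[OF assms(2) a_below] sat_orbit_fm[OF a_below] by simp
  qed
  then show "definable k Q n (orbit k Q a)"
    unfolding definable_def using wf_orbit_fm fv_orbit_fm[OF a_below] len by blast
qed

end
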